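(* Let $\mathcal P$ be a finite set with $|\mathcal P|=n$, $\kappa\in(0,1)$, $\lambda>0$, $\ell_1,\dots,\ell_T:\mathcal P\to[0,1]$, $\mu_1(i)=\kappa$ for all $i$, $\Gamma$ the set of $\kappa$-dense measures on $\mathcal P$, and $\mu_{T+1}=\Pi_\Gamma\tilde\mu_{T+1}$ with $\tilde\mu_{T+1}(i)=e^{-\lambda\sum_{t=1}^T\ell_t(i)}\mu_1(i)$. Writing $M(\hat\mu,Q_t)=\mathbb{E}_{i\sim\hat\mu}[\ell_t(i)]$, for all $T\ge1$, \[ \mu_{T+1}=\arg\min_{\mu\in\Gamma}\Big[\lambda|\mu|\sum_{t=1}^TM(\hat\mu,Q_t)+\mathrm{KL}(\mu\|\mu_1)\Big]. \]
   Context: A measure on $\mathcal P$ is $\mu:\mathcal P\to[0,1]$; $|\mu|=\sum_i\mu(i)$; $\kappa$-dense means $|\mu|/n\ge\kappa$; $\hat\mu=\mu/|\mu|$. $\mathrm{KL}(\mu_1\|\mu_2)=\sum_i\mu_1(i)\log(\mu_1(i)/\mu_2(i))+\mu_2(i)-\mu_1(i)$. $\Pi_\Gamma\tilde\mu=\arg\min_{\mu\in\Gamma}\mathrm{KL}(\mu\|\tilde\mu)$. $Q_t$ is the column strategy of round $t$, inducing loss vector $\ell_t$. *)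

theory Defs
  imports Complex_Main
begin

text \<open>The ground set P is modelled by a finite type 'a, so n = CARD('a).
  A measure is a function mu :: 'a => real with values in [0,1].\<close>

definition is_measure :: "('a::finite \<Rightarrow> real) \<Rightarrow> bool" where
  "is_measure mu \<longleftrightarrow> (\<forall>i. 0 \<le> mu i \<and> mu i \<le> 1)"

definition mass :: "('a::finite \<Rightarrow> real) \<Rightarrow> real" where
  "mass mu = (\<Sum>i\<in>UNIV. mu i)"

definition normalize :: "('a::finite \<Rightarrow> real) \<Rightarrow> 'a \<Rightarrow> real" where
  "normalize mu = (\<lambda>i. mu i / mass mu)"

definition dense_measures :: "real \<Rightarrow> ('a::finite \<Rightarrow> real) set" where
  "dense_measures kappa = {mu. is_measure mu \<and> mass mu / real (card (UNIV :: 'a set)) \<ge> kappa}"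

text \<open>Generalized KL divergence (with the convention 0 log 0 = 0, automatic
  since 0 * ln x = 0 in HOL).\<close>
definition KL :: "('a::finite \<Rightarrow> real) \<Rightarrow> ('a \<Rightarrow> real) \<Rightarrow> real" where
  "KL mu1 mu2 = (\<Sum>i\<in>UNIV. mu1 i * ln (mu1 i / mu2 i) + mu2 i - mu1 i)"

text \<open>M(p, Q_t) = E_{i ~ p}[l_t(i)], where the column strategy Q_t is represented by
  the loss vector l_t it induces.\<close>
definition expected_loss :: "('a::finite \<Rightarrow> real) \<Rightarrow> ('a \<Rightarrow> real) \<Rightarrow> real" where
  "expected_loss p l = (\<Sum>i\<in>UNIV. p i * l i)"

definition argmin_set :: "('b \<Rightarrow> real) \<Rightarrow> 'b set \<Rightarrow> 'b set" where
  "argmin_set f G = {x \<in> G. \<forall>y\<in>G. f x \<le> f y}"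

definition KL_proj :: "('a::finite \<Rightarrow> real) set \<Rightarrow> ('a \<Rightarrow> real) \<Rightarrow> ('a \<Rightarrow> real) set" where
  "KL_proj G mut = argmin_set (\<lambda>mu. KL mu mut) G"

end

theory Submission
  imports Defs
begin

text \<open>On \<open>\<Gamma>\<close> the two objectives differ by a constant. With \<open>L i = \<Sum>\<^sub>t \<ell>\<^sub>t i\<close>,
  the logarithm of the exponentially tilted measure \<open>exp (-\<lambda> L) \<mu>\<^sub>1\<close> splits off a
  linear term, so \<open>KL(\<mu>, exp (-\<lambda> L) \<mu>\<^sub>1) = \<lambda> \<Sum>\<^sub>i \<mu> i L i + KL(\<mu>, \<mu>\<^sub>1) + const\<close>;
  and since every \<open>\<kappa>\<close>-dense measure has positive mass, the mass cancels in
  \<open>|\<mu>| M(\<mu>/|\<mu>|, Q\<^sub>t) = \<Sum>\<^sub>i \<mu> i \<ell>\<^sub>t i\<close>.\<close>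

lemma argmin_set_add_const:
  assumes "\<And>x. x \<in> G \<Longrightarrow> f x = g x + (c::real)"
  shows "argmin_set f G = argmin_set g G"
  using assms unfolding argmin_set_def by force

lemma KL_exp_tilt:
  fixes mu nu w :: "'a::finite \<Rightarrow> real"
  assumes mu_nonneg: "\<And>i. 0 \<le> mu i" and nu_pos: "\<And>i. 0 < nu i"
  shows "KL mu (\<lambda>i. exp (- w i) * nu i)
       = (\<Sum>i\<in>UNIV. mu i * w i) + KL mu nu + (\<Sum>i\<in>UNIV. exp (- w i) * nu i - nu i)"
proof -
  have log_term: "mu i * ln (mu i / (exp (- w i) * nu i)) = mu i * w i + mu i * ln (mu i / nu i)"
    for i
  proof (cases "mu i = 0")
    case False
    with mu_nonneg[of i] have "0 < mu i" by simp
    with nu_pos[of i] have "ln (mu i / (exp (- w i) * nu i)) = w i + ln (mu i / nu i)"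
      by (simp add: ln_div ln_mult)
    then show ?thesis by (simp add: distrib_left)
  qed simp
  show ?thesis
    unfolding KL_def log_term by (simp add: sum.distrib sum_subtractf algebra_simps)
qed

lemma mass_pos_if_dense:
  assumes "mu \<in> dense_measures kappa" and "0 < kappa"
  shows "0 < mass (mu :: 'a::finite \<Rightarrow> real)"
proof -
  have "0 < mass mu / real (card (UNIV :: 'a set))"
    using assms unfolding dense_measures_def by auto
  then show ?thesis by (simp add: zero_less_divide_iff)
qed

lemma mass_mult_expected_loss_normalize:
  assumes "mass mu \<noteq> 0"
  shows "mass mu * expected_loss (normalize mu) l = (\<Sum>i\<in>UNIV. mu i * l i)"
  using assms unfolding expected_loss_def normalize_def by (simp add: sum_distrib_left)

theorem mainTheorem7:
  fixes kappa lambda :: real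
    and l :: "nat \<Rightarrow> 'a::finite \<Rightarrow> real"
    and T :: nat
    and mu1 mut :: "'a \<Rightarrow> real"
  assumes kappa: "0 < kappa" "kappa < 1"
    and lambda: "0 < lambda"
    and T: "T \<ge> 1"
    and loss: "\<And>t i. t \<in> {1..T} \<Longrightarrow> 0 \<le> l t i \<and> l t i \<le> 1"
    and mu1_def: "mu1 = (\<lambda>i. kappa)"
    and mut_def: "mut = (\<lambda>i. exp (- lambda * (\<Sum>t=1..T. l t i)) * mu1 i)"
  shows "KL_proj (dense_measures kappa) mut =
         argmin_set (\<lambda>mu. lambda * mass mu * (\<Sum>t=1..T. expected_loss (normalize mu) (l t))
                          + KL mu mu1) (dense_measures kappa)"
  unfolding KL_proj_def
proof (rule argmin_set_add_const)
  define w where "w i = lambda * (\<Sum>t=1..T. l t i)" for i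
  fix mu :: "'a \<Rightarrow> real"
  assume dense: "mu \<in> dense_measures kappa"
  then have "\<And>i. 0 \<le> mu i"
    unfolding dense_measures_def is_measure_def by auto
  then have "KL mu mut = (\<Sum>i\<in>UNIV. mu i * w i) + KL mu mu1 + (\<Sum>i\<in>UNIV. mut i - mu1 i)"
    using KL_exp_tilt[of mu mu1 w] kappa(1) by (simp add: mut_def mu1_def w_def)
  also have "(\<Sum>i\<in>UNIV. mu i * w i) = lambda * (\<Sum>t=1..T. \<Sum>i\<in>UNIV. mu i * l t i)"
    unfolding w_def sum_distrib_left by (subst sum.swap) (simp add: algebra_simps)
  also have "\<dots> = lambda * mass mu * (\<Sum>t=1..T. expected_loss (normalize mu) (l t))"
    using mass_pos_if_dense[OF dense kappa(1)]
    by (simp only: mult.assoc sum_distrib_left[of "mass mu"] mass_mult_expected_loss_normalize)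
  finally show "KL mu mut = (lambda * mass mu * (\<Sum>t=1..T. expected_loss (normalize mu) (l t))
      + KL mu mu1) + (\<Sum>i\<in>UNIV. mut i - mu1 i)" .
qed

end
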